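(* Let $U,V\in\mathbb{R}^n$ be random vectors whose coordinate pairs $(U_i,V_i)\in\mathbb{R}^2$, $i=1,\ldots,n$, are i.i.d. with $\mathbb{E}(U_i^4)<\infty$ and $\mathbb{E}(V_i^4)<\infty$, and let $\Pi$ be a random matrix independent of $(U,V)$. Let $m=m_n\to\infty$ with $m/n\to0$ as $n\to\infty$. (i) If $\Pi$ is a random sampling with replacement matrix with sampling probabilities $p_1,\ldots,p_n$ satisfying $\sum_{i=1}^n p_i^2=o(m^{-1})$, then as $n\to\infty$, $\mathrm{MSE}\left[\sqrt{m}\,(U^T\Pi^T\Pi V-U^TV)/n\right]\to\mathrm{Var}(U_iV_i)$. (ii) If $\Pi$ is a Bernoulli sampling matrix, then as $n\to\infty$, $\mathrm{MSE}\left[\sqrt{m}\,(U^T\Pi^T\Pi V-U^TV)/n\right]\to\mathbb{E}(U_i^2V_i^2)$.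
   Context: For a random variable $G$, $\mathrm{MSE}(G):=[\mathbb{E}(G)]^2+\mathrm{Var}(G)$. Random sampling with replacement (RS): for deterministic probabilities $p_1,\dots,p_n\ge0$ with $\sum_i p_i=1$, draw $k_1,\ldots,k_m$ independently from $\{1,\ldots,n\}$ with $\Pr(k_t=i)=p_i$, and set $\Pi=\sqrt{n/m}\,(\iota_{k_1},\ldots,\iota_{k_m})^T\in\mathbb{R}^{m\times n}$, where $\iota_k$ is the $k$-th column of the $n\times n$ identity matrix. Bernoulli sampling (BS): $\Pi=\sqrt{n/m}\,B$ where $B$ is an $n\times n$ diagonal matrix with i.i.d. Bernoulli$(m/n)$ diagonal entries. *)

theory Defs
  imports "HOL-Probability.Probability"
begin

definition MSE :: "'a measure \<Rightarrow> ('a \<Rightarrow> real) \<Rightarrow> real" where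
  "MSE M G = (\<integral>x. G x \<partial>M)^2 + (\<integral>x. (G x - (\<integral>y. G y \<partial>M))^2 \<partial>M)"

definition RS_matrix :: "nat \<Rightarrow> nat \<Rightarrow> (nat \<Rightarrow> nat) \<Rightarrow> nat \<Rightarrow> nat \<Rightarrow> real" where
  "RS_matrix n m k = (\<lambda>a i. sqrt (real n / real m) * (if k a = i then 1 else 0))"

definition BS_matrix :: "nat \<Rightarrow> nat \<Rightarrow> (nat \<Rightarrow> bool) \<Rightarrow> nat \<Rightarrow> nat \<Rightarrow> real" where
  "BS_matrix n m B = (\<lambda>a i. sqrt (real n / real m) * (if a = i \<and> B i then 1 else 0))"

text \<open>For an r x c matrix P and vectors u, v of length c: u^T P^T P v = (P u)^T (P v).\<close>
definition quadPi :: "nat \<Rightarrow> nat \<Rightarrow> (nat \<Rightarrow> nat \<Rightarrow> real) \<Rightarrow> (nat \<Rightarrow> real) \<Rightarrow> (nat \<Rightarrow> real) \<Rightarrow> real" where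
  "quadPi r c P u v = (\<Sum>a<r. (\<Sum>i<c. P a i * u i) * (\<Sum>j<c. P a j * v j))"

definition sketch_err :: "nat \<Rightarrow> nat \<Rightarrow> nat \<Rightarrow> (nat \<Rightarrow> nat \<Rightarrow> real) \<Rightarrow> (nat \<Rightarrow> real) \<Rightarrow> (nat \<Rightarrow> real) \<Rightarrow> real" where
  "sketch_err n m r P u v = sqrt (real m) * (quadPi r n P u v - (\<Sum>i<n. u i * v i)) / real n"

definition iid_pairs :: "'w measure \<Rightarrow> nat \<Rightarrow> (nat \<Rightarrow> 'w \<Rightarrow> real \<times> real) \<Rightarrow> (real \<times> real) measure \<Rightarrow> bool" where
  "iid_pairs M n X \<mu> \<longleftrightarrow>
     prob_space.indep_vars M (\<lambda>_. borel) X {..<n} \<and> (\<forall>i<n. distr M borel (X i) = \<mu>)"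

definition RS_sampling :: "'w measure \<Rightarrow> nat \<Rightarrow> nat \<Rightarrow> (nat \<Rightarrow> real) \<Rightarrow> (nat \<Rightarrow> 'w \<Rightarrow> nat)
     \<Rightarrow> (nat \<Rightarrow> 'w \<Rightarrow> real \<times> real) \<Rightarrow> bool" where
  "RS_sampling M n m p k X \<longleftrightarrow>
     prob_space.indep_vars M (\<lambda>_. count_space UNIV) k {..<m} \<and>
     (\<forall>t<m. \<forall>i<n. measure M {w \<in> space M. k t w = i} = p i) \<and>
     (\<lambda>w. restrict (\<lambda>i. X i w) {..<n}) \<in> M \<rightarrow>\<^sub>M PiM {..<n} (\<lambda>_. borel) \<and>
     (\<lambda>w. restrict (\<lambda>t. k t w) {..<m}) \<in> M \<rightarrow>\<^sub>M PiM {..<m} (\<lambda>_. count_space UNIV) \<and>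
     prob_space.indep_set M
       (sets (vimage_algebra (space M) (\<lambda>w. restrict (\<lambda>i. X i w) {..<n}) (PiM {..<n} (\<lambda>_. borel))))
       (sets (vimage_algebra (space M) (\<lambda>w. restrict (\<lambda>t. k t w) {..<m}) (PiM {..<m} (\<lambda>_. count_space UNIV))))"

definition BS_sampling :: "'w measure \<Rightarrow> nat \<Rightarrow> nat \<Rightarrow> (nat \<Rightarrow> 'w \<Rightarrow> bool)
     \<Rightarrow> (nat \<Rightarrow> 'w \<Rightarrow> real \<times> real) \<Rightarrow> bool" where
  "BS_sampling M n m B X \<longleftrightarrow>
     prob_space.indep_vars M (\<lambda>_. count_space UNIV) B {..<n} \<and>
     (\<forall>i<n. measure M {w \<in> space M. B i w} = real m / real n) \<and>
     (\<lambda>w. restrict (\<lambda>i. X i w) {..<n}) \<in> M \<rightarrow>\<^sub>M PiM {..<n} (\<lambda>_. borel) \<and>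
     (\<lambda>w. restrict (\<lambda>i. B i w) {..<n}) \<in> M \<rightarrow>\<^sub>M PiM {..<n} (\<lambda>_. count_space UNIV) \<and>
     prob_space.indep_set M
       (sets (vimage_algebra (space M) (\<lambda>w. restrict (\<lambda>i. X i w) {..<n}) (PiM {..<n} (\<lambda>_. borel))))
       (sets (vimage_algebra (space M) (\<lambda>w. restrict (\<lambda>i. B i w) {..<n}) (PiM {..<n} (\<lambda>_. count_space UNIV))))"

end

theory Submission
  imports Defs
begin

(*
  Write the sketching error as G = (sum_i D_i W_i) / sqrt m, where W_i = U_i V_i and
  D_i = N_i - m/n is the centred sampling count of coordinate i (N_i = #{t. k_t = i} for
  random sampling, N_i = B_i for Bernoulli sampling). The counts are independent of the
  i.i.d. products W_i, and E(W_i W_j) = mu1^2 + [i = j] (E W^2 - mu1^2), so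
    m E(G^2) = mu1^2 sum_{i,j} E(D_i D_j) + (E W^2 - mu1^2) sum_i E(D_i^2),
  and MSE(G) = E(G^2). Only the first two moments of the counts enter. For random sampling
  the double sum vanishes and sum_i E(D_i^2) = m (1 + (m - 1) sum_i p_i^2 - m/n); for
  Bernoulli sampling the D_i are uncorrelated and both sums equal m (1 - m/n). The limits
  follow from m sum_i p_i^2 -> 0 and m/n -> 0.
*)

section \<open>Independent random elements\<close>

lemma sigma_sets_comp_subset_vimage_algebra:
  assumes Y: "Y \<in> M \<rightarrow>\<^sub>M N" and h: "h \<in> N \<rightarrow>\<^sub>M L"
  shows "sigma_sets (space M) {(\<lambda>\<omega>. h (Y \<omega>)) -` A \<inter> space M | A. A \<in> sets L}
           \<subseteq> sets (vimage_algebra (space M) Y N)"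
proof -
  have "(\<lambda>\<omega>. h (Y \<omega>)) \<in> vimage_algebra (space M) Y N \<rightarrow>\<^sub>M L"
    using measurable_comp[OF measurable_vimage_algebra1 h, of Y "space M"] measurable_space[OF Y]
    by (simp add: comp_def Pi_iff)
  from measurable_sets[OF this] show ?thesis
    by (intro sets.sigma_sets_subset[of _ "vimage_algebra (space M) Y N", simplified]) auto
qed

lemma (in prob_space) indep_set_mono:
  assumes "indep_set A B" "A' \<subseteq> A" "B' \<subseteq> B"
  shows "indep_set A' B'"
  using assms unfolding indep_sets2_eq by blast

lemma (in prob_space) indep_var_compose_indep_vimage_algebras:
  assumes Y1: "Y1 \<in> M \<rightarrow>\<^sub>M N1" and Y2: "Y2 \<in> M \<rightarrow>\<^sub>M N2"
    and indep: "indep_set (sets (vimage_algebra (space M) Y1 N1)) (sets (vimage_algebra (space M) Y2 N2))"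
    and f: "f \<in> N1 \<rightarrow>\<^sub>M L" and g: "g \<in> N2 \<rightarrow>\<^sub>M L"
  shows "indep_var L (\<lambda>\<omega>. f (Y1 \<omega>)) L (\<lambda>\<omega>. g (Y2 \<omega>))"
proof -
  have "indep_set (sigma_sets (space M) {(\<lambda>\<omega>. f (Y1 \<omega>)) -` A \<inter> space M | A. A \<in> sets L})
                  (sigma_sets (space M) {(\<lambda>\<omega>. g (Y2 \<omega>)) -` A \<inter> space M | A. A \<in> sets L})"
    using indep sigma_sets_comp_subset_vimage_algebra[OF Y1 f] sigma_sets_comp_subset_vimage_algebra[OF Y2 g]
    by (rule indep_set_mono)
  moreover have "random_variable L (\<lambda>\<omega>. f (Y1 \<omega>))" "random_variable L (\<lambda>\<omega>. g (Y2 \<omega>))"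
    using measurable_comp[OF Y1 f] measurable_comp[OF Y2 g] by (simp_all add: comp_def)
  ultimately show ?thesis
    unfolding indep_var_eq by blast
qed

lemma (in prob_space) integral_sum_mult_indep_var:
  fixes f :: "'i \<Rightarrow> 'x \<Rightarrow> real" and g :: "'i \<Rightarrow> 'y \<Rightarrow> real"
  assumes Y1: "Y1 \<in> M \<rightarrow>\<^sub>M N1" and Y2: "Y2 \<in> M \<rightarrow>\<^sub>M N2"
    and indep: "indep_set (sets (vimage_algebra (space M) Y1 N1)) (sets (vimage_algebra (space M) Y2 N2))"
    and f: "\<And>i. i \<in> I \<Longrightarrow> f i \<in> borel_measurable N1"
    and g: "\<And>i. i \<in> I \<Longrightarrow> g i \<in> borel_measurable N2"
    and f_int: "\<And>i. i \<in> I \<Longrightarrow> integrable M (\<lambda>\<omega>. f i (Y1 \<omega>))"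
    and g_int: "\<And>i. i \<in> I \<Longrightarrow> integrable M (\<lambda>\<omega>. g i (Y2 \<omega>))"
  shows "integrable M (\<lambda>\<omega>. \<Sum>i\<in>I. f i (Y1 \<omega>) * g i (Y2 \<omega>))"
    and "(\<integral>\<omega>. (\<Sum>i\<in>I. f i (Y1 \<omega>) * g i (Y2 \<omega>)) \<partial>M)
           = (\<Sum>i\<in>I. (\<integral>\<omega>. f i (Y1 \<omega>) \<partial>M) * (\<integral>\<omega>. g i (Y2 \<omega>) \<partial>M))"
proof -
  have indep_i: "indep_var borel (\<lambda>\<omega>. f i (Y1 \<omega>)) borel (\<lambda>\<omega>. g i (Y2 \<omega>))" if "i \<in> I" for i
    by (rule indep_var_compose_indep_vimage_algebras[OF Y1 Y2 indep f[OF that] g[OF that]])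
  note prod = indep_var_integrable[OF indep_i f_int g_int] indep_var_lebesgue_integral[OF indep_i f_int g_int]
  show "integrable M (\<lambda>\<omega>. \<Sum>i\<in>I. f i (Y1 \<omega>) * g i (Y2 \<omega>))"
    using prod by auto
  show "(\<integral>\<omega>. (\<Sum>i\<in>I. f i (Y1 \<omega>) * g i (Y2 \<omega>)) \<partial>M)
           = (\<Sum>i\<in>I. (\<integral>\<omega>. f i (Y1 \<omega>) \<partial>M) * (\<integral>\<omega>. g i (Y2 \<omega>) \<partial>M))"
    using prod by (simp add: Bochner_Integration.integral_sum)
qed

lemma (in prob_space) indep_vars_integral_mult:
  fixes Y :: "'i \<Rightarrow> 'a \<Rightarrow> real"
  assumes indep: "indep_vars (\<lambda>_. borel) Y I" and "a \<in> I" "b \<in> I" "a \<noteq> b"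
    and "integrable M (Y a)" "integrable M (Y b)"
  shows "integrable M (\<lambda>\<omega>. Y a \<omega> * Y b \<omega>)"
    and "(\<integral>\<omega>. Y a \<omega> * Y b \<omega> \<partial>M) = (\<integral>\<omega>. Y a \<omega> \<partial>M) * (\<integral>\<omega>. Y b \<omega> \<partial>M)"
proof -
  have indep_ab: "indep_vars (\<lambda>_. borel) Y {a, b}"
    using indep_vars_subset[OF indep] assms(2,3) by simp
  have "\<And>i. i \<in> {a, b} \<Longrightarrow> integrable M (Y i)"
    using assms(5,6) by auto
  note prod = indep_vars_integrable[OF _ indep_ab this] indep_vars_lebesgue_integral[OF _ indep_ab this]
  then show "integrable M (\<lambda>\<omega>. Y a \<omega> * Y b \<omega>)"
    and "(\<integral>\<omega>. Y a \<omega> * Y b \<omega> \<partial>M) = (\<integral>\<omega>. Y a \<omega> \<partial>M) * (\<integral>\<omega>. Y b \<omega> \<partial>M)"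
    using \<open>a \<noteq> b\<close> by simp_all
qed

lemma (in prob_space) integral_shifted_mult:
  fixes f g :: "'a \<Rightarrow> real"
  assumes "integrable M f" "integrable M g" "integrable M (\<lambda>\<omega>. f \<omega> * g \<omega>)"
  shows "integrable M (\<lambda>\<omega>. (f \<omega> - c) * (g \<omega> - c))"
    and "(\<integral>\<omega>. (f \<omega> - c) * (g \<omega> - c) \<partial>M)
           = (\<integral>\<omega>. f \<omega> * g \<omega> \<partial>M) - c * ((\<integral>\<omega>. f \<omega> \<partial>M) + (\<integral>\<omega>. g \<omega> \<partial>M)) + c\<^sup>2"
proof -
  have expand: "(f \<omega> - c) * (g \<omega> - c) = f \<omega> * g \<omega> - c * f \<omega> - c * g \<omega> + c\<^sup>2" for \<omega>
    by (simp add: algebra_simps power2_eq_square)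
  show "integrable M (\<lambda>\<omega>. (f \<omega> - c) * (g \<omega> - c))"
    unfolding expand using assms by simp
  show "(\<integral>\<omega>. (f \<omega> - c) * (g \<omega> - c) \<partial>M)
           = (\<integral>\<omega>. f \<omega> * g \<omega> \<partial>M) - c * ((\<integral>\<omega>. f \<omega> \<partial>M) + (\<integral>\<omega>. g \<omega> \<partial>M)) + c\<^sup>2"
    unfolding expand using assms by (simp add: prob_space algebra_simps)
qed

lemma sum_sum_add_diagonal:
  fixes E :: "nat \<Rightarrow> nat \<Rightarrow> 'a::comm_semiring_1"
  shows "(\<Sum>i<n. \<Sum>j<n. (a + (if i = j then b else 0)) * E i j)
           = a * (\<Sum>i<n. \<Sum>j<n. E i j) + b * (\<Sum>i<n. E i i)"
proof -
  have "(\<Sum>j<n. (a + (if i = j then b else 0)) * E i j) = a * (\<Sum>j<n. E i j) + b * E i i"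
    if "i < n" for i
  proof -
    have "(\<Sum>j<n. (a + (if i = j then b else 0)) * E i j)
        = (\<Sum>j<n. a * E i j + (if i = j then b * E i j else 0))"
      by (intro sum.cong) (auto simp: distrib_right)
    then show ?thesis
      using that by (simp add: sum.distrib sum_distrib_left)
  qed
  then show ?thesis
    by (simp add: sum.distrib sum_distrib_left)
qed

lemma (in prob_space) second_moment_indep_weighted_sum:
  fixes W :: "nat \<Rightarrow> 'x \<Rightarrow> real" and D :: "nat \<Rightarrow> 'y \<Rightarrow> real"
  assumes Y1: "Y1 \<in> M \<rightarrow>\<^sub>M N1" and Y2: "Y2 \<in> M \<rightarrow>\<^sub>M N2"
    and indep: "indep_set (sets (vimage_algebra (space M) Y1 N1)) (sets (vimage_algebra (space M) Y2 N2))"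
    and W: "\<And>i. i < n \<Longrightarrow> W i \<in> borel_measurable N1"
    and D: "\<And>i. i < n \<Longrightarrow> D i \<in> borel_measurable N2"
    and WW_int: "\<And>i j. i < n \<Longrightarrow> j < n \<Longrightarrow> integrable M (\<lambda>\<omega>. W i (Y1 \<omega>) * W j (Y1 \<omega>))"
    and DD_int: "\<And>i j. i < n \<Longrightarrow> j < n \<Longrightarrow> integrable M (\<lambda>\<omega>. D i (Y2 \<omega>) * D j (Y2 \<omega>))"
    and WW: "\<And>i j. i < n \<Longrightarrow> j < n \<Longrightarrow>
      (\<integral>\<omega>. W i (Y1 \<omega>) * W j (Y1 \<omega>) \<partial>M) = (if i = j then \<beta> else \<alpha>\<^sup>2)"
  shows "integrable M (\<lambda>\<omega>. (\<Sum>i<n. D i (Y2 \<omega>) * W i (Y1 \<omega>))\<^sup>2)"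
    and "(\<integral>\<omega>. (\<Sum>i<n. D i (Y2 \<omega>) * W i (Y1 \<omega>))\<^sup>2 \<partial>M)
           = \<alpha>\<^sup>2 * (\<Sum>i<n. \<Sum>j<n. \<integral>\<omega>. D i (Y2 \<omega>) * D j (Y2 \<omega>) \<partial>M)
             + (\<beta> - \<alpha>\<^sup>2) * (\<Sum>i<n. \<integral>\<omega>. (D i (Y2 \<omega>))\<^sup>2 \<partial>M)"
proof -
  let ?I = "{..<n} \<times> {..<n}"
  define Wpair where "Wpair ij = (\<lambda>x. W (fst ij) x * W (snd ij) x)" for ij
  define Dpair where "Dpair ij = (\<lambda>y. D (fst ij) y * D (snd ij) y)" for ij
  have square: "(\<Sum>i<n. D i (Y2 \<omega>) * W i (Y1 \<omega>))\<^sup>2 = (\<Sum>ij\<in>?I. Wpair ij (Y1 \<omega>) * Dpair ij (Y2 \<omega>))" for \<omega>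
    unfolding power2_eq_square sum_product sum.cartesian_product
    by (intro sum.cong) (auto simp: Wpair_def Dpair_def)
  note pairs = integral_sum_mult_indep_var[OF Y1 Y2 indep, of ?I Wpair Dpair]
  have hyps: "\<And>ij. ij \<in> ?I \<Longrightarrow> Wpair ij \<in> borel_measurable N1"
    "\<And>ij. ij \<in> ?I \<Longrightarrow> Dpair ij \<in> borel_measurable N2"
    "\<And>ij. ij \<in> ?I \<Longrightarrow> integrable M (\<lambda>\<omega>. Wpair ij (Y1 \<omega>))"
    "\<And>ij. ij \<in> ?I \<Longrightarrow> integrable M (\<lambda>\<omega>. Dpair ij (Y2 \<omega>))"
    using W D WW_int DD_int by (auto simp: Wpair_def Dpair_def intro!: borel_measurable_times)
  show "integrable M (\<lambda>\<omega>. (\<Sum>i<n. D i (Y2 \<omega>) * W i (Y1 \<omega>))\<^sup>2)"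
    unfolding square using pairs(1)[OF hyps] .
  have "(\<integral>\<omega>. (\<Sum>i<n. D i (Y2 \<omega>) * W i (Y1 \<omega>))\<^sup>2 \<partial>M)
      = (\<Sum>i<n. \<Sum>j<n. (\<alpha>\<^sup>2 + (if i = j then \<beta> - \<alpha>\<^sup>2 else 0)) * (\<integral>\<omega>. D i (Y2 \<omega>) * D j (Y2 \<omega>) \<partial>M))"
  proof -
    have "(\<integral>\<omega>. (\<Sum>i<n. D i (Y2 \<omega>) * W i (Y1 \<omega>))\<^sup>2 \<partial>M)
        = (\<Sum>ij\<in>?I. (\<integral>\<omega>. Wpair ij (Y1 \<omega>) \<partial>M) * (\<integral>\<omega>. Dpair ij (Y2 \<omega>) \<partial>M))"
      unfolding square by (rule pairs(2)[OF hyps])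
    also have "\<dots> = (\<Sum>i<n. \<Sum>j<n. (\<alpha>\<^sup>2 + (if i = j then \<beta> - \<alpha>\<^sup>2 else 0)) * (\<integral>\<omega>. D i (Y2 \<omega>) * D j (Y2 \<omega>) \<partial>M))"
      unfolding sum.cartesian_product' by (intro sum.cong refl) (simp add: Wpair_def Dpair_def WW)
    finally show ?thesis .
  qed
  also have "\<dots> = \<alpha>\<^sup>2 * (\<Sum>i<n. \<Sum>j<n. \<integral>\<omega>. D i (Y2 \<omega>) * D j (Y2 \<omega>) \<partial>M)
             + (\<beta> - \<alpha>\<^sup>2) * (\<Sum>i<n. \<integral>\<omega>. (D i (Y2 \<omega>))\<^sup>2 \<partial>M)"
    by (simp add: sum_sum_add_diagonal power2_eq_square)
  finally show "(\<integral>\<omega>. (\<Sum>i<n. D i (Y2 \<omega>) * W i (Y1 \<omega>))\<^sup>2 \<partial>M)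
           = \<alpha>\<^sup>2 * (\<Sum>i<n. \<Sum>j<n. \<integral>\<omega>. D i (Y2 \<omega>) * D j (Y2 \<omega>) \<partial>M)
             + (\<beta> - \<alpha>\<^sup>2) * (\<Sum>i<n. \<integral>\<omega>. (D i (Y2 \<omega>))\<^sup>2 \<partial>M)" .
qed

lemma MSE_eq_second_moment:
  fixes G :: "'a \<Rightarrow> real"
  assumes "prob_space M" and [measurable]: "G \<in> borel_measurable M"
    and G2: "integrable M (\<lambda>x. (G x)\<^sup>2)"
  shows "MSE M G = (\<integral>x. (G x)\<^sup>2 \<partial>M)"
proof -
  interpret prob_space M by fact
  have "integrable M G"
    by (rule square_integrable_imp_integrable[OF _ G2]) simp
  then show ?thesis
    using variance_eq[of G] G2 unfolding MSE_def by simp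
qed

section \<open>Moments of the data and of the sampling counts\<close>

lemma integrable_square_mult_fst_snd:
  fixes \<mu> :: "(real \<times> real) measure"
  assumes sets: "sets \<mu> = sets borel"
    and U4: "integrable \<mu> (\<lambda>z. (fst z)^4)" and V4: "integrable \<mu> (\<lambda>z. (snd z)^4)"
  shows "integrable \<mu> (\<lambda>z. (fst z * snd z)\<^sup>2)"
proof (rule Bochner_Integration.integrable_bound)
  show "integrable \<mu> (\<lambda>z. (fst z)^4 + (snd z)^4)"
    using U4 V4 by simp
  show "(\<lambda>z. (fst z * snd z)\<^sup>2) \<in> borel_measurable \<mu>"
    unfolding measurable_cong_sets[OF sets refl]
    by (intro borel_measurable_continuous_onI continuous_intros)
  have "(x * y)\<^sup>2 \<le> x^4 + y^4" for x y :: real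
  proof -
    have "2 * x\<^sup>2 * y\<^sup>2 \<le> x^4 + y^4"
      using sum_squares_bound[of "x\<^sup>2" "y\<^sup>2"] by (simp flip: power_mult)
    moreover have "0 \<le> x\<^sup>2 * y\<^sup>2"
      by simp
    ultimately show ?thesis
      unfolding power_mult_distrib by linarith
  qed
  then show "AE z in \<mu>. norm ((fst z * snd z)\<^sup>2) \<le> norm ((fst z)^4 + (snd z)^4)"
    by simp
qed

lemma (in prob_space) iid_pairs_product_moments:
  fixes X :: "nat \<Rightarrow> 'a \<Rightarrow> real \<times> real" and h :: "real \<times> real \<Rightarrow> real"
  assumes iid: "iid_pairs M n X \<mu>" and h: "h \<in> borel_measurable borel"
    and h2_int: "integrable \<mu> (\<lambda>z. (h z)\<^sup>2)" and "i < n" "j < n"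
  shows "integrable M (\<lambda>\<omega>. h (X i \<omega>) * h (X j \<omega>))"
    and "(\<integral>\<omega>. h (X i \<omega>) * h (X j \<omega>) \<partial>M) = (if i = j then \<integral>z. (h z)\<^sup>2 \<partial>\<mu> else (\<integral>z. h z \<partial>\<mu>)\<^sup>2)"
proof -
  have indep: "indep_vars (\<lambda>_. borel) X {..<n}" and law: "\<And>l. l < n \<Longrightarrow> distr M borel (X l) = \<mu>"
    using iid unfolding iid_pairs_def by auto
  have X: "random_variable borel (X l)" if "l < n" for l
    using indep that unfolding indep_vars_def2 by auto
  have "finite_measure \<mu>"
    using prob_space.finite_measure[OF prob_space_distr[OF X[OF \<open>i < n\<close>]]] law[OF \<open>i < n\<close>] by simp
  moreover have "h \<in> borel_measurable \<mu>"
    using h measurable_cong_sets[OF sets_distr refl] law[OF \<open>i < n\<close>] by metis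
  ultimately have h_int: "integrable \<mu> h"
    using h2_int by (simp add: finite_measure.square_integrable_imp_integrable)
  have transfer: "integrable M (\<lambda>\<omega>. g (h (X l \<omega>)))" "(\<integral>\<omega>. g (h (X l \<omega>)) \<partial>M) = (\<integral>z. g (h z) \<partial>\<mu>)"
    if "l < n" "integrable \<mu> (\<lambda>z. g (h z))" "g \<in> borel_measurable borel" for l and g :: "real \<Rightarrow> real"
    using integrable_distr_eq[OF X[OF \<open>l < n\<close>], of "\<lambda>z. g (h z)"] integral_distr[OF X[OF \<open>l < n\<close>], of "\<lambda>z. g (h z)"]
      law[OF \<open>l < n\<close>] that h by simp_all
  have "integrable M (\<lambda>\<omega>. h (X i \<omega>) * h (X j \<omega>)) \<and>
      (\<integral>\<omega>. h (X i \<omega>) * h (X j \<omega>) \<partial>M) = (if i = j then \<integral>z. (h z)\<^sup>2 \<partial>\<mu> else (\<integral>z. h z \<partial>\<mu>)\<^sup>2)"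
  proof (cases "i = j")
    case True
    with transfer[of i "\<lambda>x. x\<^sup>2"] h2_int \<open>i < n\<close> show ?thesis
      by (simp add: power2_eq_square)
  next
    case False
    have "indep_vars (\<lambda>_. borel) (\<lambda>l \<omega>. h (X l \<omega>)) {..<n}"
      using indep_vars_compose2[OF indep] h by simp
    from indep_vars_integral_mult[OF this _ _ False] transfer[of _ "\<lambda>x. x"] h_int \<open>i < n\<close> \<open>j < n\<close> False
    show ?thesis
      by (simp add: power2_eq_square)
  qed
  then show "integrable M (\<lambda>\<omega>. h (X i \<omega>) * h (X j \<omega>))"
    and "(\<integral>\<omega>. h (X i \<omega>) * h (X j \<omega>) \<partial>M) = (if i = j then \<integral>z. (h z)\<^sup>2 \<partial>\<mu> else (\<integral>z. h z \<partial>\<mu>)\<^sup>2)"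
    by simp_all
qed

lemma (in prob_space) integral_of_bool_eq_prob:
  "(\<integral>\<omega>. of_bool (P \<omega>) \<partial>M) = prob {\<omega> \<in> space M. P \<omega>}"
proof -
  have "(\<integral>\<omega>. of_bool (P \<omega>) \<partial>M) = (\<integral>\<omega>. indicator {\<omega> \<in> space M. P \<omega>} \<omega> \<partial>M)"
    by (intro Bochner_Integration.integral_cong) (auto simp: indicator_def)
  also have "\<dots> = prob ({\<omega> \<in> space M. P \<omega>} \<inter> space M)"
    by (rule Bochner_Integration.integral_indicator)
  also have "{\<omega> \<in> space M. P \<omega>} \<inter> space M = {\<omega> \<in> space M. P \<omega>}"
    by blast
  finally show ?thesis .
qed

lemma (in prob_space) integral_of_bool_mult_indep_vars:
  fixes k :: "'i \<Rightarrow> 'a \<Rightarrow> 'b"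
  assumes indep: "indep_vars (\<lambda>_. count_space UNIV) k T" and "s \<in> T" "t \<in> T" "s \<noteq> t"
  shows "(\<integral>\<omega>. of_bool (k s \<omega> = x) * of_bool (k t \<omega> = y) \<partial>M)
           = prob {\<omega> \<in> space M. k s \<omega> = x} * prob {\<omega> \<in> space M. k t \<omega> = y}"
proof -
  define Y where "Y l = (\<lambda>\<omega>. of_bool (k l \<omega> = (if l = s then x else y)) :: real)" for l
  have indep_Y: "indep_vars (\<lambda>_. borel) Y T"
    unfolding Y_def using indep_vars_compose2[OF indep, of "\<lambda>l z. of_bool (z = (if l = s then x else y)) :: real"]
    by simp
  have Y_int: "integrable M (Y l)" if "l \<in> T" for l
  proof -
    have [measurable]: "k l \<in> M \<rightarrow>\<^sub>M count_space UNIV"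
      using indep that unfolding indep_vars_def2 by simp
    show ?thesis
      unfolding Y_def by (intro integrable_const_bound[where B=1]) auto
  qed
  have "(\<integral>\<omega>. Y s \<omega> * Y t \<omega> \<partial>M) = (\<integral>\<omega>. Y s \<omega> \<partial>M) * (\<integral>\<omega>. Y t \<omega> \<partial>M)"
    using assms(2-4) Y_int by (intro indep_vars_integral_mult(2)[OF indep_Y]) auto
  then show ?thesis
    using \<open>s \<noteq> t\<close> by (simp add: Y_def integral_of_bool_eq_prob)
qed

lemma (in prob_space) sample_count_moments:
  fixes k :: "nat \<Rightarrow> 'a \<Rightarrow> 'b"
  assumes indep: "indep_vars (\<lambda>_. count_space UNIV) k {..<m}"
    and px: "\<And>t. t < m \<Longrightarrow> prob {\<omega> \<in> space M. k t \<omega> = x} = p x"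
    and py: "\<And>t. t < m \<Longrightarrow> prob {\<omega> \<in> space M. k t \<omega> = y} = p y"
  shows "integrable M (\<lambda>\<omega>. \<Sum>t<m. of_bool (k t \<omega> = x) :: real)"
    and "(\<integral>\<omega>. (\<Sum>t<m. of_bool (k t \<omega> = x)) \<partial>M) = m * p x"
    and "integrable M (\<lambda>\<omega>. (\<Sum>t<m. of_bool (k t \<omega> = x)) * (\<Sum>t<m. of_bool (k t \<omega> = y)) :: real)"
    and "(\<integral>\<omega>. (\<Sum>t<m. of_bool (k t \<omega> = x)) * (\<Sum>t<m. of_bool (k t \<omega> = y)) \<partial>M)
           = m * (if x = y then p x else 0) + m * (real m - 1) * (p x * p y)"
proof -
  have [measurable]: "k t \<in> M \<rightarrow>\<^sub>M count_space UNIV" if "t < m" for t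
    using indep that unfolding indep_vars_def2 by simp
  have indicator_int: "integrable M (\<lambda>\<omega>. of_bool (k t \<omega> = a) :: real)" if "t < m" for t a
    using that by (intro integrable_const_bound[where B=1]) auto
  have indicator_exp: "(\<integral>\<omega>. of_bool (k t \<omega> = a) \<partial>M) = prob {\<omega> \<in> space M. k t \<omega> = a}"
    if "t < m" for t a
    by (rule integral_of_bool_eq_prob)
  have pair_int: "integrable M (\<lambda>\<omega>. of_bool (k s \<omega> = x) * of_bool (k t \<omega> = y) :: real)"
    if "s < m" "t < m" for s t
    using that by (intro integrable_const_bound[where B=1]) auto
  have pair_exp: "(\<integral>\<omega>. of_bool (k s \<omega> = x) * of_bool (k t \<omega> = y) \<partial>M)
      = p x * p y + (if s = t then (if x = y then p x else 0) - p x * p y else 0)"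
    if "s < m" "t < m" for s t
  proof (cases "s = t")
    case True
    then have "(\<lambda>\<omega>. of_bool (k s \<omega> = x) * of_bool (k t \<omega> = y) :: real)
        = (\<lambda>\<omega>. of_bool (x = y) * of_bool (k s \<omega> = x))"
      by auto
    then show ?thesis
      using indicator_exp[of s x] px that True by simp
  next
    case False
    then show ?thesis
      using integral_of_bool_mult_indep_vars[OF indep, of s t x y] that px py by simp
  qed
  show "integrable M (\<lambda>\<omega>. \<Sum>t<m. of_bool (k t \<omega> = x) :: real)"
    by (intro Bochner_Integration.integrable_sum indicator_int) simp
  show "(\<integral>\<omega>. (\<Sum>t<m. of_bool (k t \<omega> = x)) \<partial>M) = m * p x"
    using indicator_int indicator_exp px
    by (simp add: Bochner_Integration.integral_sum del: sum_of_bool_eq)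
  have product: "(\<Sum>s<m. of_bool (k s \<omega> = x)) * (\<Sum>t<m. of_bool (k t \<omega> = y))
      = (\<Sum>s<m. \<Sum>t<m. of_bool (k s \<omega> = x) * of_bool (k t \<omega> = y) :: real)" for \<omega>
    by (rule sum_product)
  show "integrable M (\<lambda>\<omega>. (\<Sum>t<m. of_bool (k t \<omega> = x)) * (\<Sum>t<m. of_bool (k t \<omega> = y)) :: real)"
    unfolding product by (intro Bochner_Integration.integrable_sum pair_int) simp_all
  have "(\<integral>\<omega>. (\<Sum>t<m. of_bool (k t \<omega> = x)) * (\<Sum>t<m. of_bool (k t \<omega> = y)) \<partial>M)
      = (\<Sum>s<m. \<integral>\<omega>. (\<Sum>t<m. of_bool (k s \<omega> = x) * of_bool (k t \<omega> = y)) \<partial>M :: real)"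
    unfolding product
    by (intro Bochner_Integration.integral_sum Bochner_Integration.integrable_sum pair_int) simp_all
  also have "\<dots> = (\<Sum>s<m. \<Sum>t<m. \<integral>\<omega>. of_bool (k s \<omega> = x) * of_bool (k t \<omega> = y) \<partial>M)"
    by (intro sum.cong refl Bochner_Integration.integral_sum pair_int) simp_all
  also have "\<dots> = (\<Sum>s<m. \<Sum>t<m. (p x * p y + (if s = t then (if x = y then p x else 0) - p x * p y else 0)) * 1)"
    by (intro sum.cong refl) (simp add: pair_exp)
  also have "\<dots> = m * (if x = y then p x else 0) + m * (real m - 1) * (p x * p y)"
    unfolding sum_sum_add_diagonal by (simp add: algebra_simps)
  finally show "(\<integral>\<omega>. (\<Sum>t<m. of_bool (k t \<omega> = x)) * (\<Sum>t<m. of_bool (k t \<omega> = y)) \<partial>M)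
           = m * (if x = y then p x else 0) + m * (real m - 1) * (p x * p y)" .
qed

lemma (in prob_space) centered_sample_count_moments:
  fixes k :: "nat \<Rightarrow> 'a \<Rightarrow> 'b"
  assumes indep: "indep_vars (\<lambda>_. count_space UNIV) k {..<m}"
    and px: "\<And>t. t < m \<Longrightarrow> prob {\<omega> \<in> space M. k t \<omega> = x} = p x"
    and py: "\<And>t. t < m \<Longrightarrow> prob {\<omega> \<in> space M. k t \<omega> = y} = p y"
  shows "integrable M (\<lambda>\<omega>. ((\<Sum>t<m. of_bool (k t \<omega> = x)) - c) * ((\<Sum>t<m. of_bool (k t \<omega> = y)) - c))"
    and "(\<integral>\<omega>. ((\<Sum>t<m. of_bool (k t \<omega> = x)) - c) * ((\<Sum>t<m. of_bool (k t \<omega> = y)) - c) \<partial>M)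
           = m * (if x = y then p x else 0) + m * (real m - 1) * (p x * p y)
             - c * (m * p x + m * p y) + c\<^sup>2"
  using integral_shifted_mult[OF sample_count_moments(1)[OF indep px py] sample_count_moments(1)[OF indep py px]
      sample_count_moments(3)[OF indep px py], of c]
    sample_count_moments(2,4)[OF indep px py] sample_count_moments(2)[OF indep py px]
  by simp_all

lemma sums_of_centered_count_moments:
  fixes p :: "nat \<Rightarrow> real" and m n :: nat
  assumes psum: "(\<Sum>i<n. p i) = 1"
  defines "C i j \<equiv> m * (if i = j then p i else 0) + m * (real m - 1) * (p i * p j)
                     - m / n * (m * p i + m * p j) + (m / n)\<^sup>2"
  shows "(\<Sum>i<n. \<Sum>j<n. C i j) = 0"
    and "(\<Sum>i<n. C i i) = m * (1 + (real m - 1) * (\<Sum>i<n. (p i)\<^sup>2) - m / n)"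
proof -
  have "n \<noteq> 0"
    using psum by (intro notI) simp
  have diagonal: "(\<Sum>i<n. \<Sum>j<n. if i = j then p i else 0) = 1"
    using psum by simp
  have product: "(\<Sum>i<n. \<Sum>j<n. p i * p j) = 1"
    using psum by (simp flip: sum_product)
  have rows: "(\<Sum>i<n. \<Sum>j<n. p i) = n" and columns: "(\<Sum>i<n. \<Sum>j<n. p j) = n"
    using psum by (simp_all flip: sum_distrib_left)
  have "(\<Sum>i<n. \<Sum>j<n. C i j) = m * 1 + m * (real m - 1) * 1 - m / n * (m * n + m * n) + n * (n * (m / n)\<^sup>2)"
    unfolding C_def
    by (simp only: sum.distrib sum_subtractf sum_distrib_left[symmetric] sum_constant card_lessThan
        diagonal product rows columns)
       (simp add: psum)
  also have "\<dots> = 0"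
    using \<open>n \<noteq> 0\<close> by (simp add: field_simps power2_eq_square)
  finally show "(\<Sum>i<n. \<Sum>j<n. C i j) = 0" .
  show "(\<Sum>i<n. C i i) = m * (1 + (real m - 1) * (\<Sum>i<n. (p i)\<^sup>2) - m / n)"
    unfolding C_def
    by (simp only: sum.distrib sum_subtractf sum_distrib_left[symmetric] sum_constant card_lessThan
        if_True psum)
       (use psum \<open>n \<noteq> 0\<close> in \<open>simp add: field_simps power2_eq_square\<close>)
qed

lemma (in prob_space) centered_indicator_moments:
  fixes B :: "'i \<Rightarrow> 'a \<Rightarrow> bool"
  assumes indep: "indep_vars (\<lambda>_. count_space UNIV) B I"
    and q: "\<And>i. i \<in> I \<Longrightarrow> prob {\<omega> \<in> space M. B i \<omega>} = q" and "i \<in> I" "j \<in> I"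
  shows "integrable M (\<lambda>\<omega>. (of_bool (B i \<omega>) - q) * (of_bool (B j \<omega>) - q))"
    and "(\<integral>\<omega>. (of_bool (B i \<omega>) - q) * (of_bool (B j \<omega>) - q) \<partial>M) = (if i = j then q - q\<^sup>2 else 0)"
proof -
  have [measurable]: "B l \<in> M \<rightarrow>\<^sub>M count_space UNIV" if "l \<in> I" for l
    using indep that unfolding indep_vars_def2 by simp
  have int: "integrable M (\<lambda>\<omega>. of_bool (B l \<omega>) :: real)" if "l \<in> I" for l
    using that by (intro integrable_const_bound[where B=1]) auto
  have exp: "(\<integral>\<omega>. of_bool (B l \<omega>) \<partial>M) = q" if "l \<in> I" for l
    using that q integral_of_bool_eq_prob[of "B l"] by simp
  have "integrable M (\<lambda>\<omega>. of_bool (B i \<omega>) * of_bool (B j \<omega>) :: real)"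
    using assms(3,4) by (intro integrable_const_bound[where B=1]) auto
  moreover have "(\<integral>\<omega>. of_bool (B i \<omega>) * of_bool (B j \<omega>) \<partial>M) = (if i = j then q else q\<^sup>2)"
  proof (cases "i = j")
    case True
    then show ?thesis
      using exp \<open>i \<in> I\<close> by (simp flip: of_bool_conj)
  next
    case False
    then show ?thesis
      using integral_of_bool_mult_indep_vars[OF indep \<open>i \<in> I\<close> \<open>j \<in> I\<close>, of True True] q assms(3,4)
      by (simp add: power2_eq_square)
  qed
  ultimately show "integrable M (\<lambda>\<omega>. (of_bool (B i \<omega>) - q) * (of_bool (B j \<omega>) - q))"
    and "(\<integral>\<omega>. (of_bool (B i \<omega>) - q) * (of_bool (B j \<omega>) - q) \<partial>M) = (if i = j then q - q\<^sup>2 else 0)"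
    using integral_shifted_mult[OF int[OF \<open>i \<in> I\<close>] int[OF \<open>j \<in> I\<close>], of q] exp \<open>i \<in> I\<close> \<open>j \<in> I\<close>
    by (auto simp: power2_eq_square)
qed

section \<open>Mean squared error of the sketched inner product\<close>

lemma sketch_err_eq_centered:
  assumes "quadPi r n P u v = real n / real m * (\<Sum>i<n. N i * (u i * v i))"
  shows "sketch_err n m r P u v = (\<Sum>i<n. (N i - real m / real n) * (u i * v i)) / sqrt m"
proof (cases "n = 0 \<or> m = 0")
  case True
  then show ?thesis
    unfolding sketch_err_def assms by auto
next
  case False
  have rescale: "sqrt m * (real n / real m * a - b) / real n = (a - real m / real n * b) / sqrt m"
    for a b :: real
    using False by (simp add: field_simps)
  have "(\<Sum>i<n. (N i - real m / real n) * (u i * v i))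
      = (\<Sum>i<n. N i * (u i * v i)) - real m / real n * (\<Sum>i<n. u i * v i)"
    by (simp add: algebra_simps sum_subtractf sum_distrib_left)
  then show ?thesis
    unfolding sketch_err_def assms rescale by simp
qed

lemma mult_sqrt_mult_sqrt:
  fixes a b c :: real
  assumes "0 \<le> c"
  shows "sqrt c * a * (sqrt c * b) = c * (a * b)"
proof -
  have "sqrt c * a * (sqrt c * b) = (sqrt c * sqrt c) * (a * b)"
    by (simp only: ac_simps)
  with assms show ?thesis
    by simp
qed

lemma quadPi_RS_matrix:
  "quadPi m n (RS_matrix n m k) u v = real n / real m * (\<Sum>i<n. (\<Sum>t<m. of_bool (k t = i)) * (u i * v i))"
proof -
  have select: "(\<Sum>i<n. RS_matrix n m k t i * f i) = (if k t < n then sqrt (n / m) * f (k t) else 0)"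
    for t and f :: "nat \<Rightarrow> real"
  proof -
    have "(\<Sum>i<n. RS_matrix n m k t i * f i) = (\<Sum>i<n. if k t = i then sqrt (n / m) * f i else 0)"
      by (intro sum.cong) (auto simp: RS_matrix_def)
    then show ?thesis
      by simp
  qed
  have "(\<Sum>i<n. of_bool (k t = i) * (u i * v i)) = (if k t < n then u (k t) * v (k t) else 0)" for t
  proof -
    have "(\<Sum>i<n. of_bool (k t = i) * (u i * v i)) = (\<Sum>i<n. if k t = i then u i * v i else 0)"
      by (intro sum.cong) auto
    then show ?thesis
      by simp
  qed
  then have row: "(\<Sum>i<n. RS_matrix n m k t i * u i) * (\<Sum>j<n. RS_matrix n m k t j * v j)
      = real n / real m * (\<Sum>i<n. of_bool (k t = i) * (u i * v i))" for t
    unfolding select by (simp add: mult_sqrt_mult_sqrt)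
  have "quadPi m n (RS_matrix n m k) u v
      = (\<Sum>t<m. real n / real m * (\<Sum>i<n. of_bool (k t = i) * (u i * v i)))"
    unfolding quadPi_def row ..
  also have "\<dots> = real n / real m * (\<Sum>i<n. \<Sum>t<m. of_bool (k t = i) * (u i * v i))"
    by (simp only: sum_distrib_left[symmetric] sum.swap[of _ "{..<m}"])
  also have "\<dots> = real n / real m * (\<Sum>i<n. (\<Sum>t<m. of_bool (k t = i)) * (u i * v i))"
    by (simp only: sum_distrib_right)
  finally show ?thesis .
qed

lemma quadPi_BS_matrix:
  "quadPi n n (BS_matrix n m B) u v = real n / real m * (\<Sum>i<n. of_bool (B i) * (u i * v i))"
proof -
  have select: "(\<Sum>i<n. BS_matrix n m B a i * f i) = sqrt (n / m) * (of_bool (B a) * f a)"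
    if "a < n" for a and f :: "nat \<Rightarrow> real"
  proof -
    have "(\<Sum>i<n. BS_matrix n m B a i * f i) = (\<Sum>i<n. if a = i then sqrt (n / m) * (of_bool (B a) * f i) else 0)"
      by (intro sum.cong) (auto simp: BS_matrix_def)
    then show ?thesis
      using that by simp
  qed
  have "quadPi n n (BS_matrix n m B) u v = (\<Sum>a<n. real n / real m * (of_bool (B a) * (u a * v a)))"
    unfolding quadPi_def
    by (intro sum.cong refl) (auto simp: select mult_sqrt_mult_sqrt)
  then show ?thesis
    by (simp only: sum_distrib_left)
qed

lemma MSE_weighted_sum_iid_pairs:
  fixes M :: "'a measure" and X :: "nat \<Rightarrow> 'a \<Rightarrow> real \<times> real" and \<mu> :: "(real \<times> real) measure"
    and Y :: "'a \<Rightarrow> 'y" and D :: "nat \<Rightarrow> 'y \<Rightarrow> real" and m :: nat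
  defines "\<mu>1 \<equiv> \<integral>z. fst z * snd z \<partial>\<mu>" and "s2 \<equiv> \<integral>z. (fst z * snd z)\<^sup>2 \<partial>\<mu>"
  assumes M: "prob_space M" and iid: "iid_pairs M n X \<mu>"
    and U4: "integrable \<mu> (\<lambda>z. (fst z)^4)" and V4: "integrable \<mu> (\<lambda>z. (snd z)^4)"
    and X: "(\<lambda>\<omega>. restrict (\<lambda>i. X i \<omega>) {..<n}) \<in> M \<rightarrow>\<^sub>M PiM {..<n} (\<lambda>_. borel)"
    and Y: "Y \<in> M \<rightarrow>\<^sub>M N"
    and indep: "prob_space.indep_set M
      (sets (vimage_algebra (space M) (\<lambda>\<omega>. restrict (\<lambda>i. X i \<omega>) {..<n}) (PiM {..<n} (\<lambda>_. borel))))
      (sets (vimage_algebra (space M) Y N))"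
    and D: "\<And>i. i < n \<Longrightarrow> D i \<in> borel_measurable N"
    and DD_int: "\<And>i j. i < n \<Longrightarrow> j < n \<Longrightarrow> integrable M (\<lambda>\<omega>. D i (Y \<omega>) * D j (Y \<omega>))"
  shows "MSE M (\<lambda>\<omega>. (\<Sum>i<n. D i (Y \<omega>) * (fst (X i \<omega>) * snd (X i \<omega>))) / sqrt m)
    = (\<mu>1\<^sup>2 * (\<Sum>i<n. \<Sum>j<n. \<integral>\<omega>. D i (Y \<omega>) * D j (Y \<omega>) \<partial>M)
       + (s2 - \<mu>1\<^sup>2) * (\<Sum>i<n. \<integral>\<omega>. (D i (Y \<omega>))\<^sup>2 \<partial>M)) / m"
proof -
  interpret prob_space M by (rule M)
  define W where "W i = (\<lambda>f :: nat \<Rightarrow> real \<times> real. fst (f i) * snd (f i))" for i :: nat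
  define S where "S \<omega> = (\<Sum>i<n. D i (Y \<omega>) * W i (restrict (\<lambda>i. X i \<omega>) {..<n}))" for \<omega>
  have h: "(\<lambda>z. fst z * snd z :: real) \<in> borel_measurable borel"
    by (intro borel_measurable_continuous_onI continuous_intros)
  have W_meas: "W i \<in> borel_measurable (PiM {..<n} (\<lambda>_. borel))" if "i < n" for i
    using measurable_compose[OF measurable_component_singleton[of i "{..<n}" "\<lambda>_. borel"] h] that
    by (simp add: W_def)
  have W_moments: "integrable M (\<lambda>\<omega>. W i (restrict (\<lambda>i. X i \<omega>) {..<n}) * W j (restrict (\<lambda>i. X i \<omega>) {..<n}))
      \<and> (\<integral>\<omega>. W i (restrict (\<lambda>i. X i \<omega>) {..<n}) * W j (restrict (\<lambda>i. X i \<omega>) {..<n}) \<partial>M)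
          = (if i = j then s2 else \<mu>1\<^sup>2)"
    if "i < n" "j < n" for i j
  proof -
    have "sets \<mu> = sets borel"
      using iid \<open>i < n\<close> unfolding iid_pairs_def by (metis sets_distr)
    from iid_pairs_product_moments[OF iid h integrable_square_mult_fst_snd[OF this U4 V4] that]
    show ?thesis
      using that by (simp add: W_def \<mu>1_def s2_def)
  qed
  note second_moment = second_moment_indep_weighted_sum[where \<beta>=s2 and \<alpha>=\<mu>1, OF X Y indep W_meas D _ DD_int]
  have "S \<in> borel_measurable M"
    unfolding S_def using X Y D W_meas by (auto intro!: borel_measurable_sum borel_measurable_times
        intro: measurable_compose)
  moreover have "integrable M (\<lambda>\<omega>. (S \<omega> / sqrt m)\<^sup>2)"
    using second_moment(1) W_moments by (simp add: S_def power_divide)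
  ultimately have "MSE M (\<lambda>\<omega>. S \<omega> / sqrt m) = (\<integral>\<omega>. (S \<omega>)\<^sup>2 \<partial>M) / m"
    by (simp add: MSE_eq_second_moment[OF M] power_divide)
  also have "(\<integral>\<omega>. (S \<omega>)\<^sup>2 \<partial>M) = \<mu>1\<^sup>2 * (\<Sum>i<n. \<Sum>j<n. \<integral>\<omega>. D i (Y \<omega>) * D j (Y \<omega>) \<partial>M)
       + (s2 - \<mu>1\<^sup>2) * (\<Sum>i<n. \<integral>\<omega>. (D i (Y \<omega>))\<^sup>2 \<partial>M)"
    using second_moment(2) W_moments unfolding S_def by simp
  finally show ?thesis
    by (simp add: S_def W_def)
qed

lemma MSE_sketch_err_RS:
  fixes M :: "'a measure" and X :: "nat \<Rightarrow> 'a \<Rightarrow> real \<times> real" and \<mu> :: "(real \<times> real) measure"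
    and p :: "nat \<Rightarrow> real" and k :: "nat \<Rightarrow> 'a \<Rightarrow> nat"
  assumes M: "prob_space M" and iid: "iid_pairs M n X \<mu>"
    and U4: "integrable \<mu> (\<lambda>z. (fst z)^4)" and V4: "integrable \<mu> (\<lambda>z. (snd z)^4)"
    and RS: "RS_sampling M n m p k X" and psum: "(\<Sum>i<n. p i) = 1" and "0 < m"
  shows "MSE M (\<lambda>\<omega>. sketch_err n m m (RS_matrix n m (\<lambda>t. k t \<omega>)) (\<lambda>i. fst (X i \<omega>)) (\<lambda>i. snd (X i \<omega>)))
    = ((\<integral>z. (fst z * snd z)\<^sup>2 \<partial>\<mu>) - (\<integral>z. fst z * snd z \<partial>\<mu>)\<^sup>2)
        * (1 + (real m - 1) * (\<Sum>i<n. (p i)\<^sup>2) - m / n)"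
proof -
  interpret prob_space M by (rule M)
  define Y where "Y \<omega> = restrict (\<lambda>t. k t \<omega>) {..<m}" for \<omega>
  define D where "D i g = (\<Sum>t<m. of_bool (g t = i)) - real m / real n" for i and g :: "nat \<Rightarrow> nat"
  have indep_k: "indep_vars (\<lambda>_. count_space UNIV) k {..<m}"
    and marg: "\<And>t i. t < m \<Longrightarrow> i < n \<Longrightarrow> prob {\<omega> \<in> space M. k t \<omega> = i} = p i"
    and X: "(\<lambda>\<omega>. restrict (\<lambda>i. X i \<omega>) {..<n}) \<in> M \<rightarrow>\<^sub>M PiM {..<n} (\<lambda>_. borel)"
    and Y: "Y \<in> M \<rightarrow>\<^sub>M PiM {..<m} (\<lambda>_. count_space UNIV)"
    and indep: "indep_set
      (sets (vimage_algebra (space M) (\<lambda>\<omega>. restrict (\<lambda>i. X i \<omega>) {..<n}) (PiM {..<n} (\<lambda>_. borel))))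
      (sets (vimage_algebra (space M) Y (PiM {..<m} (\<lambda>_. count_space UNIV))))"
    using RS unfolding RS_sampling_def Y_def by auto
  have D_Y: "D i (Y \<omega>) = (\<Sum>t<m. of_bool (k t \<omega> = i)) - real m / real n" for i \<omega>
    unfolding D_def Y_def by (intro arg_cong2[where f = minus] sum.cong) auto
  have D: "D i \<in> borel_measurable (PiM {..<m} (\<lambda>_. count_space UNIV))" for i
    unfolding D_def by measurable
  have DD: "integrable M (\<lambda>\<omega>. D i (Y \<omega>) * D j (Y \<omega>))
      \<and> (\<integral>\<omega>. D i (Y \<omega>) * D j (Y \<omega>) \<partial>M)
          = m * (if i = j then p i else 0) + m * (real m - 1) * (p i * p j)
            - m / n * (m * p i + m * p j) + (m / n)\<^sup>2"
    if "i < n" "j < n" for i j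
    using centered_sample_count_moments[OF indep_k, of i p j "real m / real n"] marg that
    unfolding D_Y by simp
  have "MSE M (\<lambda>\<omega>. sketch_err n m m (RS_matrix n m (\<lambda>t. k t \<omega>)) (\<lambda>i. fst (X i \<omega>)) (\<lambda>i. snd (X i \<omega>)))
      = MSE M (\<lambda>\<omega>. (\<Sum>i<n. D i (Y \<omega>) * (fst (X i \<omega>) * snd (X i \<omega>))) / sqrt m)"
    unfolding sketch_err_eq_centered[OF quadPi_RS_matrix] D_Y ..
  also have "\<dots> = ((\<integral>z. fst z * snd z \<partial>\<mu>)\<^sup>2 * (\<Sum>i<n. \<Sum>j<n. \<integral>\<omega>. D i (Y \<omega>) * D j (Y \<omega>) \<partial>M)
       + ((\<integral>z. (fst z * snd z)\<^sup>2 \<partial>\<mu>) - (\<integral>z. fst z * snd z \<partial>\<mu>)\<^sup>2)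
         * (\<Sum>i<n. \<integral>\<omega>. (D i (Y \<omega>))\<^sup>2 \<partial>M)) / m"
    using DD by (intro MSE_weighted_sum_iid_pairs[OF M iid U4 V4 X Y indep D]) simp
  also have "(\<Sum>i<n. \<Sum>j<n. \<integral>\<omega>. D i (Y \<omega>) * D j (Y \<omega>) \<partial>M)
      = (\<Sum>i<n. \<Sum>j<n. m * (if i = j then p i else 0) + m * (real m - 1) * (p i * p j)
            - m / n * (m * p i + m * p j) + (m / n)\<^sup>2)"
    using DD by (intro sum.cong refl) simp
  also have "\<dots> = 0"
    by (rule sums_of_centered_count_moments(1)[OF psum])
  also have "(\<Sum>i<n. \<integral>\<omega>. (D i (Y \<omega>))\<^sup>2 \<partial>M)
      = (\<Sum>i<n. m * (if i = i then p i else 0) + m * (real m - 1) * (p i * p i)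
            - m / n * (m * p i + m * p i) + (m / n)\<^sup>2)"
    using DD by (intro sum.cong refl) (simp add: power2_eq_square)
  also have "\<dots> = m * (1 + (real m - 1) * (\<Sum>i<n. (p i)\<^sup>2) - m / n)"
    by (rule sums_of_centered_count_moments(2)[OF psum])
  finally show ?thesis
    using \<open>0 < m\<close> by simp
qed

lemma MSE_sketch_err_BS:
  fixes M :: "'a measure" and X :: "nat \<Rightarrow> 'a \<Rightarrow> real \<times> real" and \<mu> :: "(real \<times> real) measure"
    and B :: "nat \<Rightarrow> 'a \<Rightarrow> bool"
  assumes M: "prob_space M" and iid: "iid_pairs M n X \<mu>"
    and U4: "integrable \<mu> (\<lambda>z. (fst z)^4)" and V4: "integrable \<mu> (\<lambda>z. (snd z)^4)"
    and BS: "BS_sampling M n m B X" and "0 < n" "0 < m"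
  shows "MSE M (\<lambda>\<omega>. sketch_err n m n (BS_matrix n m (\<lambda>i. B i \<omega>)) (\<lambda>i. fst (X i \<omega>)) (\<lambda>i. snd (X i \<omega>)))
    = (\<integral>z. (fst z * snd z)\<^sup>2 \<partial>\<mu>) * (1 - m / n)"
proof -
  interpret prob_space M by (rule M)
  define q where "q = real m / real n"
  define Y where "Y \<omega> = restrict (\<lambda>i. B i \<omega>) {..<n}" for \<omega>
  define D where "D i g = of_bool (g i) - q" for i and g :: "nat \<Rightarrow> bool"
  have indep_B: "indep_vars (\<lambda>_. count_space UNIV) B {..<n}"
    and marg: "\<And>i. i \<in> {..<n} \<Longrightarrow> prob {\<omega> \<in> space M. B i \<omega>} = q"
    and X: "(\<lambda>\<omega>. restrict (\<lambda>i. X i \<omega>) {..<n}) \<in> M \<rightarrow>\<^sub>M PiM {..<n} (\<lambda>_. borel)"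
    and Y: "Y \<in> M \<rightarrow>\<^sub>M PiM {..<n} (\<lambda>_. count_space UNIV)"
    and indep: "indep_set
      (sets (vimage_algebra (space M) (\<lambda>\<omega>. restrict (\<lambda>i. X i \<omega>) {..<n}) (PiM {..<n} (\<lambda>_. borel))))
      (sets (vimage_algebra (space M) Y (PiM {..<n} (\<lambda>_. count_space UNIV))))"
    using BS unfolding BS_sampling_def Y_def q_def by auto
  have D_Y: "D i (Y \<omega>) = of_bool (B i \<omega>) - q" if "i < n" for i \<omega>
    using that unfolding D_def Y_def by simp
  have D: "D i \<in> borel_measurable (PiM {..<n} (\<lambda>_. count_space UNIV))" if "i < n" for i
  proof -
    have "i \<in> {..<n}"
      using that by simp
    then show ?thesis
      unfolding D_def by measurable
  qed
  note DD = centered_indicator_moments[OF indep_B marg]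
  have "MSE M (\<lambda>\<omega>. sketch_err n m n (BS_matrix n m (\<lambda>i. B i \<omega>)) (\<lambda>i. fst (X i \<omega>)) (\<lambda>i. snd (X i \<omega>)))
      = MSE M (\<lambda>\<omega>. (\<Sum>i<n. D i (Y \<omega>) * (fst (X i \<omega>) * snd (X i \<omega>))) / sqrt m)"
    unfolding sketch_err_eq_centered[OF quadPi_BS_matrix] q_def[symmetric]
    by (simp add: D_Y)
  also have "\<dots> = ((\<integral>z. fst z * snd z \<partial>\<mu>)\<^sup>2 * (\<Sum>i<n. \<Sum>j<n. \<integral>\<omega>. D i (Y \<omega>) * D j (Y \<omega>) \<partial>M)
       + ((\<integral>z. (fst z * snd z)\<^sup>2 \<partial>\<mu>) - (\<integral>z. fst z * snd z \<partial>\<mu>)\<^sup>2)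
         * (\<Sum>i<n. \<integral>\<omega>. (D i (Y \<omega>))\<^sup>2 \<partial>M)) / m"
    using DD by (intro MSE_weighted_sum_iid_pairs[OF M iid U4 V4 X Y indep D]) (simp_all add: D_Y)
  also have "(\<Sum>i<n. \<Sum>j<n. \<integral>\<omega>. D i (Y \<omega>) * D j (Y \<omega>) \<partial>M) = n * (q - q\<^sup>2)"
    using DD by (simp add: D_Y)
  also have "(\<Sum>i<n. \<integral>\<omega>. (D i (Y \<omega>))\<^sup>2 \<partial>M) = n * (q - q\<^sup>2)"
    using DD by (simp add: D_Y power2_eq_square)
  also have "((\<integral>z. fst z * snd z \<partial>\<mu>)\<^sup>2 * (n * (q - q\<^sup>2))
       + ((\<integral>z. (fst z * snd z)\<^sup>2 \<partial>\<mu>) - (\<integral>z. fst z * snd z \<partial>\<mu>)\<^sup>2) * (n * (q - q\<^sup>2))) / m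
      = (\<integral>z. (fst z * snd z)\<^sup>2 \<partial>\<mu>) * (n * (q - q\<^sup>2) / m)"
    by (simp add: field_simps)
  also have "n * (q - q\<^sup>2) / m = 1 - m / n"
    using \<open>0 < n\<close> \<open>0 < m\<close> by (simp add: q_def field_simps power2_eq_square)
  finally show ?thesis .
qed

section \<open>Asymptotics\<close>

lemma RS_variance_factor_tendsto:
  fixes m :: "nat \<Rightarrow> nat" and p :: "nat \<Rightarrow> nat \<Rightarrow> real"
  assumes m_pos: "\<forall>\<^sub>F n in sequentially. 1 \<le> m n"
    and mp: "(\<lambda>n. real (m n) * (\<Sum>i<n. (p n i)\<^sup>2)) \<longlonglongrightarrow> 0"
    and m_n: "(\<lambda>n. real (m n) / real n) \<longlonglongrightarrow> 0"
  shows "(\<lambda>n. 1 + (real (m n) - 1) * (\<Sum>i<n. (p n i)\<^sup>2) - real (m n) / real n) \<longlonglongrightarrow> 1"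
proof -
  have "(\<lambda>n. \<Sum>i<n. (p n i)\<^sup>2) \<longlonglongrightarrow> 0"
  proof (rule tendsto_sandwich[OF _ _ tendsto_const mp])
    show "\<forall>\<^sub>F n in sequentially. 0 \<le> (\<Sum>i<n. (p n i)\<^sup>2)"
      by (simp add: sum_nonneg)
    show "\<forall>\<^sub>F n in sequentially. (\<Sum>i<n. (p n i)\<^sup>2) \<le> real (m n) * (\<Sum>i<n. (p n i)\<^sup>2)"
      using m_pos
    proof eventually_elim
      case (elim n)
      then show ?case
        using mult_right_mono[of 1 "real (m n)" "\<Sum>i<n. (p n i)\<^sup>2"] by (simp add: sum_nonneg)
    qed
  qed
  then have "(\<lambda>n. 1 + (real (m n) * (\<Sum>i<n. (p n i)\<^sup>2) - (\<Sum>i<n. (p n i)\<^sup>2)) - real (m n) / real n)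
      \<longlonglongrightarrow> 1 + (0 - 0) - 0"
    by (intro tendsto_intros mp m_n)
  then show ?thesis
    by (simp add: algebra_simps)
qed

lemma MSE_sketch_err_RS_tendsto:
  fixes M :: "nat \<Rightarrow> 'a measure" and X :: "nat \<Rightarrow> nat \<Rightarrow> 'a \<Rightarrow> real \<times> real"
    and \<mu> :: "(real \<times> real) measure" and m :: "nat \<Rightarrow> nat" and p :: "nat \<Rightarrow> nat \<Rightarrow> real"
    and k :: "nat \<Rightarrow> nat \<Rightarrow> 'a \<Rightarrow> nat"
  assumes M: "\<And>n. prob_space (M n)" and iid: "\<And>n. iid_pairs (M n) n (X n) \<mu>"
    and U4: "integrable \<mu> (\<lambda>z. (fst z)^4)" and V4: "integrable \<mu> (\<lambda>z. (snd z)^4)"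
    and m_inf: "filterlim m at_top sequentially" and m_n: "(\<lambda>n. real (m n) / real n) \<longlonglongrightarrow> 0"
    and psum: "\<And>n. 1 \<le> n \<Longrightarrow> (\<Sum>i<n. p n i) = 1"
    and mp: "(\<lambda>n. real (m n) * (\<Sum>i<n. (p n i)\<^sup>2)) \<longlonglongrightarrow> 0"
    and RS: "\<And>n. 1 \<le> n \<Longrightarrow> RS_sampling (M n) n (m n) (p n) (k n) (X n)"
  shows "(\<lambda>n. MSE (M n) (\<lambda>\<omega>. sketch_err n (m n) (m n) (RS_matrix n (m n) (\<lambda>t. k n t \<omega>))
                          (\<lambda>i. fst (X n i \<omega>)) (\<lambda>i. snd (X n i \<omega>))))
    \<longlonglongrightarrow> (\<integral>z. (fst z * snd z)\<^sup>2 \<partial>\<mu>) - (\<integral>z. fst z * snd z \<partial>\<mu>)\<^sup>2"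
proof -
  let ?\<sigma>2 = "(\<integral>z. (fst z * snd z)\<^sup>2 \<partial>\<mu>) - (\<integral>z. fst z * snd z \<partial>\<mu>)\<^sup>2"
  have m_pos: "\<forall>\<^sub>F n in sequentially. 1 \<le> m n"
    using m_inf by (simp add: filterlim_at_top)
  have "(\<lambda>n. ?\<sigma>2 * (1 + (real (m n) - 1) * (\<Sum>i<n. (p n i)\<^sup>2) - real (m n) / real n)) \<longlonglongrightarrow> ?\<sigma>2 * 1"
    by (intro tendsto_mult tendsto_const RS_variance_factor_tendsto[OF m_pos mp m_n])
  moreover have "\<forall>\<^sub>F n in sequentially.
      ?\<sigma>2 * (1 + (real (m n) - 1) * (\<Sum>i<n. (p n i)\<^sup>2) - real (m n) / real n)
      = MSE (M n) (\<lambda>\<omega>. sketch_err n (m n) (m n) (RS_matrix n (m n) (\<lambda>t. k n t \<omega>))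
                          (\<lambda>i. fst (X n i \<omega>)) (\<lambda>i. snd (X n i \<omega>)))"
    using eventually_ge_at_top[of 1] m_pos
    by eventually_elim (simp add: MSE_sketch_err_RS[OF M iid U4 V4 RS psum])
  ultimately show ?thesis
    by (simp add: Lim_transform_eventually)
qed

lemma MSE_sketch_err_BS_tendsto:
  fixes M :: "nat \<Rightarrow> 'a measure" and X :: "nat \<Rightarrow> nat \<Rightarrow> 'a \<Rightarrow> real \<times> real"
    and \<mu> :: "(real \<times> real) measure" and m :: "nat \<Rightarrow> nat" and B :: "nat \<Rightarrow> nat \<Rightarrow> 'a \<Rightarrow> bool"
  assumes M: "\<And>n. prob_space (M n)" and iid: "\<And>n. iid_pairs (M n) n (X n) \<mu>"
    and U4: "integrable \<mu> (\<lambda>z. (fst z)^4)" and V4: "integrable \<mu> (\<lambda>z. (snd z)^4)"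
    and m_inf: "filterlim m at_top sequentially" and m_n: "(\<lambda>n. real (m n) / real n) \<longlonglongrightarrow> 0"
    and BS: "\<And>n. 1 \<le> n \<Longrightarrow> m n \<le> n \<Longrightarrow> BS_sampling (M n) n (m n) (B n) (X n)"
  shows "(\<lambda>n. MSE (M n) (\<lambda>\<omega>. sketch_err n (m n) n (BS_matrix n (m n) (\<lambda>i. B n i \<omega>))
                          (\<lambda>i. fst (X n i \<omega>)) (\<lambda>i. snd (X n i \<omega>))))
    \<longlonglongrightarrow> (\<integral>z. (fst z * snd z)\<^sup>2 \<partial>\<mu>)"
proof -
  let ?s2 = "\<integral>z. (fst z * snd z)\<^sup>2 \<partial>\<mu>"
  have m_pos: "\<forall>\<^sub>F n in sequentially. 1 \<le> m n"
    using m_inf by (simp add: filterlim_at_top)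
  have m_le_n: "\<forall>\<^sub>F n in sequentially. m n \<le> n"
    using order_tendstoD(2)[OF m_n zero_less_one] eventually_gt_at_top[of 0]
    by eventually_elim (simp add: divide_less_eq)
  have "(\<lambda>n. ?s2 * (1 - real (m n) / real n)) \<longlonglongrightarrow> ?s2 * (1 - 0)"
    by (intro tendsto_intros m_n)
  moreover have "\<forall>\<^sub>F n in sequentially. ?s2 * (1 - real (m n) / real n)
      = MSE (M n) (\<lambda>\<omega>. sketch_err n (m n) n (BS_matrix n (m n) (\<lambda>i. B n i \<omega>))
                          (\<lambda>i. fst (X n i \<omega>)) (\<lambda>i. snd (X n i \<omega>)))"
    using eventually_ge_at_top[of 1] m_pos m_le_n
    by eventually_elim (simp add: MSE_sketch_err_BS[OF M iid U4 V4 BS])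
  ultimately show ?thesis
    by (simp add: Lim_transform_eventually)
qed

theorem theorem3p1:
  fixes M :: "nat \<Rightarrow> 'w measure"
    and X :: "nat \<Rightarrow> nat \<Rightarrow> 'w \<Rightarrow> real \<times> real"
    and \<mu> :: "(real \<times> real) measure"
    and m :: "nat \<Rightarrow> nat"
    and p :: "nat \<Rightarrow> nat \<Rightarrow> real"
    and k :: "nat \<Rightarrow> nat \<Rightarrow> 'w \<Rightarrow> nat"
    and B :: "nat \<Rightarrow> nat \<Rightarrow> 'w \<Rightarrow> bool"
  assumes M: "\<And>n. prob_space (M n)"
    and mu: "prob_space \<mu>"
    and iid: "\<And>n. iid_pairs (M n) n (X n) \<mu>"
    and U4: "integrable \<mu> (\<lambda>z. (fst z)^4)"
    and V4: "integrable \<mu> (\<lambda>z. (snd z)^4)"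
    and m_inf: "filterlim m at_top sequentially"
    and m_n: "(\<lambda>n. real (m n) / real n) \<longlonglongrightarrow> 0"
  shows
   "((\<forall>n. 1 \<le> n \<longrightarrow> (\<forall>i<n. 0 \<le> p n i) \<and> (\<Sum>i<n. p n i) = 1) \<and>
     (\<lambda>n. real (m n) * (\<Sum>i<n. (p n i)^2)) \<longlonglongrightarrow> 0 \<and>
     (\<forall>n. 1 \<le> n \<longrightarrow> RS_sampling (M n) n (m n) (p n) (k n) (X n))
     \<longrightarrow>
     (\<lambda>n. MSE (M n) (\<lambda>w. sketch_err n (m n) (m n) (RS_matrix n (m n) (\<lambda>t. k n t w))
                          (\<lambda>i. fst (X n i w)) (\<lambda>i. snd (X n i w))))
       \<longlonglongrightarrow> (\<integral>z. (fst z * snd z)^2 \<partial>\<mu>) - (\<integral>z. fst z * snd z \<partial>\<mu>)^2)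
  \<and>
    ((\<forall>n. 1 \<le> n \<and> m n \<le> n \<longrightarrow> BS_sampling (M n) n (m n) (B n) (X n))
     \<longrightarrow>
     (\<lambda>n. MSE (M n) (\<lambda>w. sketch_err n (m n) n (BS_matrix n (m n) (\<lambda>i. B n i w))
                          (\<lambda>i. fst (X n i w)) (\<lambda>i. snd (X n i w))))
       \<longlonglongrightarrow> (\<integral>z. (fst z * snd z)^2 \<partial>\<mu>))"
  using MSE_sketch_err_RS_tendsto[OF M iid U4 V4 m_inf m_n, of p k]
    MSE_sketch_err_BS_tendsto[OF M iid U4 V4 m_inf m_n, of B]
  by blast

end
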